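(* Let $n\geq 2$ be an integer. Let $(A,\cdot)$ be a unital commutative associative algebra over $\mathbb{C}$ with unit $1$, and let $[\cdot,\ldots,\cdot]:A^n\to A$ be an $n$-ary bracket such that $(A,[\cdot,\ldots,\cdot])$ is an $n$-Lie algebra. Suppose that for all $u_1,\ldots,u_n\in A$, $$[u_1,\ldots,u_n]=\sum_{i=1}^{n}(-1)^{i-1}u_i\,[1,u_1,\ldots,\hat{u}_i,\ldots,u_n]$$ (where $\hat{u}_i$ means that $u_i$ is omitted), and $$[1,u_1u_2,u_3,\ldots,u_n]=u_1[1,u_2,u_3,\ldots,u_n]+u_2[1,u_1,u_3,\ldots,u_n].$$ Then $(A,\cdot,[\cdot,\ldots,\cdot])$ is a strong transposed Poisson $n$-Lie algebra.
   Context: An $n$-Lie algebra is a vector space $L$ with an $n$-linear skew-symmetric bracket $[\cdot,\ldots,\cdot]$ satisfying the generalized Jacobi identity $[[x_1,\ldots,x_n],y_2,\ldots,y_n]=\sum_{i=1}^n[x_1,\ldots,x_{i-1},[x_i,y_2,\ldots,y_n],x_{i+1},\ldots,x_n]$ for all $x_i,y_j\in L$. A transposed Poisson $n$-Lie algebra is a triple $(A,\cdot,[\cdot,\ldots,\cdot])$ where $(A,\cdot)$ is a commutative associative algebra, $(A,[\cdot,\ldots,\cdot])$ is an $n$-Lie algebra, and for all $h,a_1,\ldots,a_n\in A$: $n\,h\,[a_1,\ldots,a_n]=\sum_{i=1}^n[a_1,\ldots,h a_i,\ldots,a_n]$ (with $ha_i$ in the $i$-th slot). It is called strong if moreover for all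 $h,y_1,y_2,x_1,\ldots,x_{n-1}\in A$: $$y_1[hy_2,x_1,\ldots,x_{n-1}]-y_2[hy_1,x_1,\ldots,x_{n-1}]+\sum_{i=1}^{n-1}(-1)^{i-1}hx_i[y_1,y_2,x_1,\ldots,\hat{x}_i,\ldots,x_{n-1}]=0.$$ *)

theory Defs
  imports Complex_Main
begin

text \<open>A unital commutative associative algebra over the complex numbers:
  the ring structure comes from the type class comm_ring_1, the scalar
  multiplication is the explicit map scale, which must make the carrier a complex
  vector space and be compatible with the multiplication.\<close>
definition complex_comm_algebra :: "(complex \<Rightarrow> 'a::comm_ring_1 \<Rightarrow> 'a) \<Rightarrow> bool" where
  "complex_comm_algebra scale \<longleftrightarrow>
     Vector_Spaces.vector_space scale \<and>
     (\<forall>c x y. scale c (x * y) = scale c x * y)"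

text \<open>An n-ary bracket is modelled as a function on lists; only lists of
  length n are relevant. Arguments are indexed 0..n-1.\<close>

definition omit :: "nat \<Rightarrow> 'a list \<Rightarrow> 'a list" where
  "omit i xs = take i xs @ drop (Suc i) xs"

definition n_multilinear :: "nat \<Rightarrow> (complex \<Rightarrow> 'a::comm_ring_1 \<Rightarrow> 'a) \<Rightarrow> ('a list \<Rightarrow> 'a) \<Rightarrow> bool" where
  "n_multilinear n scale B \<longleftrightarrow>
     (\<forall>xs i. length xs = n \<longrightarrow> i < n \<longrightarrow>
        Vector_Spaces.linear scale scale (\<lambda>x. B (xs[i := x])))"

definition n_skew_symmetric :: "nat \<Rightarrow> ('a::comm_ring_1 list \<Rightarrow> 'a) \<Rightarrow> bool" where
  "n_skew_symmetric n B \<longleftrightarrow>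
     (\<forall>xs i j. length xs = n \<longrightarrow> i < n \<longrightarrow> j < n \<longrightarrow> i \<noteq> j \<longrightarrow>
        B (xs[i := xs ! j, j := xs ! i]) = - B xs)"

definition n_Jacobi :: "nat \<Rightarrow> ('a::comm_ring_1 list \<Rightarrow> 'a) \<Rightarrow> bool" where
  "n_Jacobi n B \<longleftrightarrow>
     (\<forall>xs ys. length xs = n \<longrightarrow> length ys = n - 1 \<longrightarrow>
        B (B xs # ys) = (\<Sum>i<n. B (xs[i := B (xs ! i # ys)])))"

definition n_Lie :: "nat \<Rightarrow> (complex \<Rightarrow> 'a::comm_ring_1 \<Rightarrow> 'a) \<Rightarrow> ('a list \<Rightarrow> 'a) \<Rightarrow> bool" where
  "n_Lie n scale B \<longleftrightarrow> n_multilinear n scale B \<and> n_skew_symmetric n B \<and> n_Jacobi n B"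

definition transposed_Poisson_n_Lie ::
    "nat \<Rightarrow> (complex \<Rightarrow> 'a::comm_ring_1 \<Rightarrow> 'a) \<Rightarrow> ('a list \<Rightarrow> 'a) \<Rightarrow> bool" where
  "transposed_Poisson_n_Lie n scale B \<longleftrightarrow>
     complex_comm_algebra scale \<and> n_Lie n scale B \<and>
     (\<forall>h xs. length xs = n \<longrightarrow>
        scale (of_nat n) (h * B xs) = (\<Sum>i<n. B (xs[i := h * xs ! i])))"

text \<open>Strong condition; index i here is 0-based, so the sign (-1)^(i-1) of the
  1-based formula becomes (-1)^i.\<close>
definition strong_transposed_Poisson_n_Lie ::
    "nat \<Rightarrow> (complex \<Rightarrow> 'a::comm_ring_1 \<Rightarrow> 'a) \<Rightarrow> ('a list \<Rightarrow> 'a) \<Rightarrow> bool" where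
  "strong_transposed_Poisson_n_Lie n scale B \<longleftrightarrow>
     transposed_Poisson_n_Lie n scale B \<and>
     (\<forall>h y1 y2 xs. length xs = n - 1 \<longrightarrow>
        y1 * B (h * y2 # xs) - y2 * B (h * y1 # xs)
        + (\<Sum>i<n - 1. (-1) ^ i * h * xs ! i * B (y1 # y2 # omit i xs)) = 0)"

end

theory Submission
  imports Defs
begin

text \<open>Put D(z_1,...,z_(n-1)) = [1,z_1,...,z_(n-1)]. The first hypothesis says that
  on arguments of length n the bracket is the alternating expansion dD, where
  (dE)(x_0,...,x_m) = sum_j (-1)^j x_j E(x_0,...,x_(j-1),x_(j+1),...,x_m); the second says
  that D is a derivation in its first argument, and skew-symmetry of the bracket makes
  D skew-symmetric. The operator d behaves like a Koszul differential: d(dE) = 0 for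
  every E. The transposed Poisson identity for dD follows by induction on the arity
  from the Leibniz rule for D, and the strong identity is the Leibniz rule combined
  with d(dD) = 0 evaluated at (y_1,y_2,...).\<close>

definition alternating_expansion :: "('a::comm_ring_1 list \<Rightarrow> 'a) \<Rightarrow> 'a list \<Rightarrow> 'a" where
  "alternating_expansion E xs = (\<Sum>j<length xs. (-1) ^ j * xs ! j * E (omit j xs))"

definition head_derivation :: "nat \<Rightarrow> ('a::comm_ring_1 list \<Rightarrow> 'a) \<Rightarrow> bool" where
  "head_derivation m E \<longleftrightarrow> (\<forall>u v zs. length zs + 1 = m \<longrightarrow>
      E (u * v # zs) = u * E (v # zs) + v * E (u # zs))"

lemma omit_0_Cons [simp]: "omit 0 (a # ys) = ys"
  by (simp add: omit_def)

lemma omit_Suc_Cons [simp]: "omit (Suc j) (a # ys) = a # omit j ys"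
  by (simp add: omit_def)

lemma length_omit [simp]: "i < length xs \<Longrightarrow> length (omit i xs) = length xs - 1"
  by (simp add: omit_def)

lemma omit_update_Suc:
  assumes "Suc k < length ys"
  shows "omit k (ys[Suc k := ys ! k]) = omit (Suc k) ys"
  using assms
proof (induction k arbitrary: ys)
  case 0
  then show ?case by (cases ys; cases "tl ys") auto
next
  case (Suc k)
  then show ?case by (cases ys) auto
qed

lemma alternating_expansion_Nil [simp]: "alternating_expansion E [] = 0"
  by (simp add: alternating_expansion_def)

lemma alternating_expansion_Cons:
  "alternating_expansion E (a # ys) =
     a * E ys - alternating_expansion (\<lambda>zs. E (a # zs)) ys"
  unfolding alternating_expansion_def
  by (simp add: sum.lessThan_Suc_shift sum_negf[symmetric] del: sum.lessThan_Suc)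

lemma alternating_expansion_add:
  "alternating_expansion (\<lambda>zs. F zs + G zs) xs =
     alternating_expansion F xs + alternating_expansion G xs"
  unfolding alternating_expansion_def by (simp add: sum.distrib[symmetric] algebra_simps)

lemma alternating_expansion_diff:
  "alternating_expansion (\<lambda>zs. F zs - G zs) xs =
     alternating_expansion F xs - alternating_expansion G xs"
  unfolding alternating_expansion_def by (simp add: sum_subtractf[symmetric] algebra_simps)

lemma alternating_expansion_cmult:
  "alternating_expansion (\<lambda>zs. c * F zs) xs = c * alternating_expansion F xs"
  unfolding alternating_expansion_def by (simp add: sum_distrib_left algebra_simps)

lemma alternating_expansion_cong:
  assumes "\<And>zs. length zs + 1 = length xs \<Longrightarrow> F zs = G zs"
  shows "alternating_expansion F xs = alternating_expansion G xs"
  unfolding alternating_expansion_def by (rule sum.cong) (auto simp: assms)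

lemma alternating_expansion_alternating_expansion:
  "alternating_expansion (alternating_expansion E) xs = 0"
proof (induction xs arbitrary: E)
  case Nil
  then show ?case by simp
next
  case (Cons a ys)
  have "alternating_expansion (alternating_expansion E) (a # ys) =
      a * alternating_expansion E ys -
      alternating_expansion (\<lambda>zs. alternating_expansion E (a # zs)) ys"
    by (rule alternating_expansion_Cons)
  also have "(\<lambda>zs. alternating_expansion E (a # zs)) =
      (\<lambda>zs. a * E zs - alternating_expansion (\<lambda>z. E (a # z)) zs)"
    by (simp add: alternating_expansion_Cons)
  also have "alternating_expansion \<dots> ys =
      a * alternating_expansion E ys -
      alternating_expansion (alternating_expansion (\<lambda>z. E (a # z))) ys"
    by (simp add: alternating_expansion_diff alternating_expansion_cmult)
  finally show ?case using Cons.IH by simp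
qed

lemma n_skew_symmetric_Cons:
  assumes "n_skew_symmetric m E"
  shows "n_skew_symmetric (m - 1) (\<lambda>zs. E (a # zs))"
  unfolding n_skew_symmetric_def
proof (intro allI impI)
  fix zs :: "'a list" and i j
  assume "length zs = m - 1" "i < m - 1" "j < m - 1" "i \<noteq> j"
  then have "E ((a # zs)[Suc i := (a # zs) ! Suc j, Suc j := (a # zs) ! Suc i]) = - E (a # zs)"
    using assms[unfolded n_skew_symmetric_def, rule_format, of "a # zs" "Suc i" "Suc j"] by simp
  then show "E (a # zs[i := zs ! j, j := zs ! i]) = - E (a # zs)"
    by simp
qed

lemma n_skew_symmetric_update_eq_Cons_omit:
  assumes "n_skew_symmetric m E" "length ys = m" "i < m"
  shows "E (ys[i := w]) = (-1) ^ i * E (w # omit i ys)"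
  using assms(2,3)
proof (induction i arbitrary: ys)
  case 0
  then show ?case by (cases ys) auto
next
  case (Suc k)
  let ?zs = "ys[Suc k := ys ! k]"
  have swap: "(ys[Suc k := w])[k := ys[Suc k := w] ! Suc k, Suc k := ys[Suc k := w] ! k] =
      ?zs[k := w]"
    using Suc.prems by (simp add: list_update_swap)
  have "E (?zs[k := w]) = - E (ys[Suc k := w])"
    using assms(1)[unfolded n_skew_symmetric_def, rule_format, of "ys[Suc k := w]" k "Suc k"]
      Suc.prems
    unfolding swap by simp
  moreover have "E (?zs[k := w]) = (-1) ^ k * E (w # omit (Suc k) ys)"
    using Suc.IH[of ?zs] Suc.prems omit_update_Suc[of k ys] by simp
  ultimately show ?case by simp
qed

lemma head_derivation_Cons:
  assumes "n_skew_symmetric m E" "head_derivation m E"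
  shows "head_derivation (m - 1) (\<lambda>zs. E (a # zs))"
  unfolding head_derivation_def
proof (intro allI impI)
  fix u v :: 'a and zs :: "'a list"
  assume len: "length zs + 1 = m - 1"
  have swap: "E (a # x # zs) = - E (x # a # zs)" for x
    using assms(1)[unfolded n_skew_symmetric_def, rule_format, of "x # a # zs" 0 1] len
    by simp
  have "E (u * v # a # zs) = u * E (v # a # zs) + v * E (u # a # zs)"
    using assms(2) len unfolding head_derivation_def by auto
  then show "E (a # u * v # zs) = u * E (a # v # zs) + v * E (a # u # zs)"
    using swap by (simp add: algebra_simps)
qed

lemma alternating_expansion_head_derivation:
  assumes "head_derivation (length xs) E"
  shows "alternating_expansion (\<lambda>zs. E (u * v # zs)) xs =
    u * alternating_expansion (\<lambda>zs. E (v # zs)) xs +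
    v * alternating_expansion (\<lambda>zs. E (u # zs)) xs"
proof -
  have "alternating_expansion (\<lambda>zs. E (u * v # zs)) xs =
      alternating_expansion (\<lambda>zs. u * E (v # zs) + v * E (u # zs)) xs"
    using assms by (intro alternating_expansion_cong) (auto simp: head_derivation_def)
  then show ?thesis
    by (simp add: alternating_expansion_add alternating_expansion_cmult)
qed

lemma head_derivation_update:
  assumes "n_skew_symmetric m E" "head_derivation m E" "length ys = m" "i < m"
  shows "E (ys[i := h * ys ! i]) = h * E ys + (-1) ^ i * ys ! i * E (h # omit i ys)"
proof -
  have "E (ys[i := h * ys ! i]) = (-1) ^ i * E (h * ys ! i # omit i ys)"
    using assms by (intro n_skew_symmetric_update_eq_Cons_omit) auto
  also have "\<dots> = (-1) ^ i * (h * E (ys ! i # omit i ys) + ys ! i * E (h # omit i ys))"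
    using assms by (simp add: head_derivation_def)
  also have "E (ys ! i # omit i ys) = (-1) ^ i * E ys"
    using n_skew_symmetric_update_eq_Cons_omit[OF assms(1), of ys i "ys ! i"] assms by simp
  finally show ?thesis by (simp add: algebra_simps)
qed

lemma sum_update_head_derivation:
  assumes "n_skew_symmetric (length ys) E" "head_derivation (length ys) E"
  shows "(\<Sum>i<length ys. E (ys[i := h * ys ! i])) =
    of_nat (length ys) * h * E ys + alternating_expansion (\<lambda>zs. E (h # zs)) ys"
  using head_derivation_update[OF assms]
  by (simp add: sum.distrib alternating_expansion_def)

lemma alternating_expansion_transposed_Poisson:
  "n_skew_symmetric (length xs - 1) E \<Longrightarrow> head_derivation (length xs - 1) E \<Longrightarrow>
    (\<Sum>i<length xs. alternating_expansion E (xs[i := h * xs ! i])) =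
      of_nat (length xs) * h * alternating_expansion E xs"
proof (induction xs arbitrary: E)
  case Nil
  then show ?case by simp
next
  case (Cons a ys)
  let ?m = "length ys" and ?Ea = "\<lambda>zs. E (a # zs)" and ?Eh = "\<lambda>zs. E (h # zs)"
  have skew: "n_skew_symmetric ?m E" and der: "head_derivation ?m E"
    using Cons.prems by simp_all
  have IH: "(\<Sum>i<?m. alternating_expansion ?Ea (ys[i := h * ys ! i])) =
      of_nat ?m * h * alternating_expansion ?Ea ys"
    using Cons.IH n_skew_symmetric_Cons[OF skew] head_derivation_Cons[OF skew der] by simp
  have "(\<Sum>i<length (a # ys). alternating_expansion E ((a # ys)[i := h * (a # ys) ! i])) =
      alternating_expansion E (h * a # ys) +
      (\<Sum>i<?m. alternating_expansion E (a # ys[i := h * ys ! i]))"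
    by (simp add: sum.lessThan_Suc_shift del: sum.lessThan_Suc)
  also have "\<dots> = h * a * E ys - alternating_expansion (\<lambda>zs. E (h * a # zs)) ys +
      (\<Sum>i<?m. a * E (ys[i := h * ys ! i]) - alternating_expansion ?Ea (ys[i := h * ys ! i]))"
    by (simp add: alternating_expansion_Cons)
  also have "\<dots> = h * a * E ys -
      (h * alternating_expansion ?Ea ys + a * alternating_expansion ?Eh ys) +
      a * (of_nat ?m * h * E ys + alternating_expansion ?Eh ys) -
      of_nat ?m * h * alternating_expansion ?Ea ys"
    by (simp add: sum_subtractf sum_distrib_left[symmetric] IH
        sum_update_head_derivation[OF skew der] alternating_expansion_head_derivation[OF der])
  also have "\<dots> = of_nat (length (a # ys)) * h * alternating_expansion E (a # ys)"
    by (simp add: alternating_expansion_Cons algebra_simps)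
  finally show ?case .
qed

lemma alternating_expansion_strong:
  assumes "head_derivation (length xs) E"
  shows "y\<^sub>1 * alternating_expansion E (h * y\<^sub>2 # xs) -
    y\<^sub>2 * alternating_expansion E (h * y\<^sub>1 # xs) +
    h * alternating_expansion (\<lambda>zs. alternating_expansion E (y\<^sub>1 # y\<^sub>2 # zs)) xs = 0"
proof -
  let ?E = "\<lambda>y zs. E (y # zs)"
  have "alternating_expansion (\<lambda>zs. alternating_expansion E (y\<^sub>1 # y\<^sub>2 # zs)) xs =
      alternating_expansion (\<lambda>zs. y\<^sub>1 * ?E y\<^sub>2 zs - y\<^sub>2 * ?E y\<^sub>1 zs +
        alternating_expansion (\<lambda>z. E (y\<^sub>1 # y\<^sub>2 # z)) zs) xs"
    by (simp add: alternating_expansion_Cons algebra_simps)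
  also have "\<dots> =
      y\<^sub>1 * alternating_expansion (?E y\<^sub>2) xs - y\<^sub>2 * alternating_expansion (?E y\<^sub>1) xs"
    by (simp add: alternating_expansion_add alternating_expansion_diff
        alternating_expansion_cmult alternating_expansion_alternating_expansion)
  finally have expand:
    "alternating_expansion (\<lambda>zs. alternating_expansion E (y\<^sub>1 # y\<^sub>2 # zs)) xs =
      y\<^sub>1 * alternating_expansion (?E y\<^sub>2) xs - y\<^sub>2 * alternating_expansion (?E y\<^sub>1) xs" .
  show ?thesis
    unfolding expand
    by (simp add: alternating_expansion_Cons alternating_expansion_head_derivation[OF assms]
        algebra_simps)
qed

lemma vector_space_scale_of_nat:
  assumes "Vector_Spaces.vector_space (scale :: complex \<Rightarrow> 'a::comm_ring_1 \<Rightarrow> 'a)"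
  shows "scale (of_nat k) x = of_nat k * x"
proof -
  interpret vector_space scale by (rule assms)
  show ?thesis
    by (induction k) (simp_all add: scale_left_distrib algebra_simps)
qed

lemma transposed_Poisson_identity_if_alternating_expansion:
  fixes scale :: "complex \<Rightarrow> 'a::comm_ring_1 \<Rightarrow> 'a"
  assumes "Vector_Spaces.vector_space scale"
    and "n_skew_symmetric (n - 1) D" "head_derivation (n - 1) D"
    and B_eq: "\<And>us. length us = n \<Longrightarrow> B us = alternating_expansion D us"
    and len: "length xs = n"
  shows "scale (of_nat n) (h * B xs) = (\<Sum>i<n. B (xs[i := h * xs ! i]))"
proof -
  have "(\<Sum>i<n. B (xs[i := h * xs ! i])) =
      (\<Sum>i<length xs. alternating_expansion D (xs[i := h * xs ! i]))"
    using len by (intro sum.cong) (auto simp: B_eq)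
  also have "\<dots> = of_nat n * h * alternating_expansion D xs"
    using alternating_expansion_transposed_Poisson[of xs D h] assms(2,3) len by simp
  finally show ?thesis
    using len B_eq vector_space_scale_of_nat[OF assms(1)] by (simp add: mult.assoc)
qed

lemma strong_identity_if_alternating_expansion:
  assumes "n \<ge> 2" "head_derivation (n - 1) D"
    and B_eq: "\<And>us. length us = n \<Longrightarrow> B us = alternating_expansion D us"
    and len: "length xs = n - 1"
  shows "y\<^sub>1 * B (h * y\<^sub>2 # xs) - y\<^sub>2 * B (h * y\<^sub>1 # xs)
    + (\<Sum>i<n - 1. (-1) ^ i * h * xs ! i * B (y\<^sub>1 # y\<^sub>2 # omit i xs)) = 0"
proof -
  have "(\<Sum>i<n - 1. (-1) ^ i * h * xs ! i * B (y\<^sub>1 # y\<^sub>2 # omit i xs)) =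
      h * alternating_expansion (\<lambda>zs. B (y\<^sub>1 # y\<^sub>2 # zs)) xs"
    using len by (simp add: alternating_expansion_def sum_distrib_left ac_simps)
  also have "alternating_expansion (\<lambda>zs. B (y\<^sub>1 # y\<^sub>2 # zs)) xs =
      alternating_expansion (\<lambda>zs. alternating_expansion D (y\<^sub>1 # y\<^sub>2 # zs)) xs"
    using len assms(1) by (intro alternating_expansion_cong) (simp add: B_eq)
  finally show ?thesis
    using alternating_expansion_strong[of xs D y\<^sub>1 h y\<^sub>2] assms len B_eq by simp
qed

theorem mainTheorem1:
  fixes n :: nat
    and scale :: "complex \<Rightarrow> 'a::comm_ring_1 \<Rightarrow> 'a"
    and B :: "'a list \<Rightarrow> 'a"
  assumes "n \<ge> 2"
    and "complex_comm_algebra scale"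
    and "n_Lie n scale B"
    and "\<forall>us. length us = n \<longrightarrow>
           B us = (\<Sum>i<n. (-1) ^ i * us ! i * B (1 # omit i us))"
    and "\<forall>u1 u2 us. length us = n - 2 \<longrightarrow>
           B (1 # u1 * u2 # us) = u1 * B (1 # u2 # us) + u2 * B (1 # u1 # us)"
  shows "strong_transposed_Poisson_n_Lie n scale B"
proof -
  define D where "D = (\<lambda>zs. B (1 # zs))"
  have B_eq: "B us = alternating_expansion D us" if "length us = n" for us
    unfolding assms(4)[rule_format, OF that] alternating_expansion_def D_def
    using that by simp
  have "n_skew_symmetric (n - 1) D"
    using n_skew_symmetric_Cons[of n B 1] assms(3) by (simp add: n_Lie_def D_def)
  moreover have "head_derivation (n - 1) D"
    using assms(5) by (auto simp: head_derivation_def D_def)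
  moreover have "Vector_Spaces.vector_space scale"
    using assms(2) by (simp add: complex_comm_algebra_def)
  ultimately show ?thesis
    using assms(1-3) B_eq
      transposed_Poisson_identity_if_alternating_expansion[of scale n D B]
      strong_identity_if_alternating_expansion[of n D B]
    by (simp add: strong_transposed_Poisson_n_Lie_def transposed_Poisson_n_Lie_def)
qed

end
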